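(* Let $\mathcal{A}\subset\mathbb{Z}^2$ be finite with $\Delta_{\mathcal{A}}$ a polygon, and let $f\colon\mathcal{A}\to\mathbb{R}^2$ be compatible. Then for every $w\in\mathbb{R}^{\mathcal{A}}_{>}$ and every edge $\delta$ of $\Delta_{\mathcal{A}}$, the restriction of the toric Bézier patch $F_w$ to $\delta$ is injective.
   Context: Let $\mathcal{A}\subset\mathbb{Z}^2$ be finite and write $\Delta_{\mathcal{A}}$ for its convex hull, a lattice polygon. Write it via its edge inequalities as $\Delta_{\mathcal{A}}=\{x\in\mathbb{R}^2 : h_i(x)\ge 0,\ i=1,\dots,\ell\}$. Here there is one $h_i$ for each edge, and $h_i(x,y)=a_ix+b_iy+c_i$ with integers $a_i,b_i,c_i$ and $\gcd(a_i,b_i)=1$. For $\mathbf{a}\in\mathcal{A}$ the toric Bernstein polynomial is $\beta_{\mathbf{a}}(x)=\prod_{i=1}^{\ell} h_i(x)^{h_i(\mathbf{a})}$. Given control points $f\colon\mathcal{A}\to\mathbb{R}^d$ and weights $w=(w_{\mathbf{a}})\in\mathbb{R}^{\mathcal{A}}_{>}$ (all $w_{\mathbf{a}}>0$), the toric Bézier patch is $$F_w(x)=\frac{\sum_{\mathbf{a}\in\mathcal{A}} w_{\mathbf{a}} f(\mathbf{a})\beta_{\mathbf{a}}(x)}{\sum_{\mathbf{a}\in\mathcal{A}} w_{\mathbf{a}}\beta_{\mathbf{a}}(x)},\qquad x\in\Delta_{\mathcal{A}}.$$ An affinely independent triple $p_0,p_1,p_2\in\mathbb{R}^2$ has orientation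 given by the sign of $\det(p_1-p_0,\,p_2-p_0)$. An assignment $f\colon\mathcal{A}\to\mathbb{R}^2$ is weakly compatible if both of the following hold: <ol> <li>There exist affinely independent $\mathbf{a}_0,\mathbf{a}_1,\mathbf{a}_2\in\mathcal{A}$ such that $f(\mathbf{a}_0),f(\mathbf{a}_1),f(\mathbf{a}_2)$ are affinely independent.</li> <li>For any affinely independent $\mathbf{a}'_0,\mathbf{a}'_1,\mathbf{a}'_2\in\mathcal{A}$ with the same orientation as $\mathbf{a}_0,\mathbf{a}_1,\mathbf{a}_2$: if $f(\mathbf{a}'_0),f(\mathbf{a}'_1),f(\mathbf{a}'_2)$ are affinely independent, then they have the same orientation as $f(\mathbf{a}_0),f(\mathbf{a}_1),f(\mathbf{a}_2)$.</li> </ol> The assignment $f$ is compatible if it is weakly compatible and no two distinct vertices of $\Delta_{\mathcal{A}}$ have the same image under $f$. *)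

theory Defs
  imports "HOL-Analysis.Analysis"
begin

definition rp :: "int \<times> int \<Rightarrow> real \<times> real" where
  "rp a = (of_int (fst a), of_int (snd a))"

definition Delta :: "(int \<times> int) set \<Rightarrow> (real \<times> real) set" where
  "Delta A = convex hull (rp ` A)"

definition hval :: "int \<times> int \<times> int \<Rightarrow> real \<times> real \<Rightarrow> real" where
  "hval h x = (case h of (a, b, c) \<Rightarrow> of_int a * fst x + of_int b * snd x + of_int c)"

definition is_edge :: "(real \<times> real) set \<Rightarrow> (real \<times> real) set \<Rightarrow> bool" where
  "is_edge P e \<longleftrightarrow> e face_of P \<and> aff_dim e = 1"

text \<open>The edge inequalities: one primitive integer functional (a,b,c), gcd a b = 1,
  for each edge, nonnegative on the polygon and vanishing on the edge.\<close>
definition edge_ineqs :: "(int \<times> int) set \<Rightarrow> (int \<times> int \<times> int) set" where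
  "edge_ineqs A = {(a, b, c). gcd a b = 1 \<and>
      (\<forall>x\<in>Delta A. hval (a, b, c) x \<ge> 0) \<and>
      (\<exists>e. is_edge (Delta A) e \<and> (\<forall>x\<in>e. hval (a, b, c) x = 0))}"

text \<open>Toric Bernstein polynomial beta_a(x) = prod_i h_i(x)^(h_i(a)); h_i(a) \<ge> 0 for a in A.\<close>
definition bernstein :: "(int \<times> int) set \<Rightarrow> int \<times> int \<Rightarrow> real \<times> real \<Rightarrow> real" where
  "bernstein A a x = (\<Prod>h\<in>edge_ineqs A. hval h x ^ nat \<lfloor>hval h (rp a)\<rfloor>)"

definition toric_patch :: "(int \<times> int) set \<Rightarrow> (int \<times> int \<Rightarrow> real) \<Rightarrow>
    (int \<times> int \<Rightarrow> real \<times> real) \<Rightarrow> real \<times> real \<Rightarrow> real \<times> real" where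
  "toric_patch A w f x =
     (1 / (\<Sum>a\<in>A. w a * bernstein A a x)) *\<^sub>R (\<Sum>a\<in>A. (w a * bernstein A a x) *\<^sub>R f a)"

definition aff_indep3 :: "real \<times> real \<Rightarrow> real \<times> real \<Rightarrow> real \<times> real \<Rightarrow> bool" where
  "aff_indep3 p0 p1 p2 \<longleftrightarrow> distinct [p0, p1, p2] \<and> \<not> affine_dependent {p0, p1, p2}"

definition det2 :: "real \<times> real \<Rightarrow> real \<times> real \<Rightarrow> real" where
  "det2 u v = fst u * snd v - snd u * fst v"

definition orientation :: "real \<times> real \<Rightarrow> real \<times> real \<Rightarrow> real \<times> real \<Rightarrow> real" where
  "orientation p0 p1 p2 = sgn (det2 (p1 - p0) (p2 - p0))"

definition weakly_compatible :: "(int \<times> int) set \<Rightarrow> (int \<times> int \<Rightarrow> real \<times> real) \<Rightarrow> bool" where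
  "weakly_compatible A f \<longleftrightarrow>
    (\<exists>a0\<in>A. \<exists>a1\<in>A. \<exists>a2\<in>A.
       aff_indep3 (rp a0) (rp a1) (rp a2) \<and> aff_indep3 (f a0) (f a1) (f a2) \<and>
       (\<forall>b0\<in>A. \<forall>b1\<in>A. \<forall>b2\<in>A.
          aff_indep3 (rp b0) (rp b1) (rp b2) \<and>
          orientation (rp b0) (rp b1) (rp b2) = orientation (rp a0) (rp a1) (rp a2) \<and>
          aff_indep3 (f b0) (f b1) (f b2) \<longrightarrow>
          orientation (f b0) (f b1) (f b2) = orientation (f a0) (f a1) (f a2)))"

definition compatible :: "(int \<times> int) set \<Rightarrow> (int \<times> int \<Rightarrow> real \<times> real) \<Rightarrow> bool" where
  "compatible A f \<longleftrightarrow> weakly_compatible A f \<and>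
    (\<forall>a\<in>A. \<forall>b\<in>A. rp a extreme_point_of Delta A \<and> rp b extreme_point_of Delta A \<and> a \<noteq> b
       \<longrightarrow> f a \<noteq> f b)"

end

theory Submission
  imports Defs
begin

text \<open>
  Fix an edge with endpoints (vertices) \<open>a0\<close>, \<open>a1\<close>; its lattice points \<open>I\<close> are
  ordered by their parameter \<open>\<sigma>\<close> along the edge.  Along the edge only the control points
  \<open>f a\<close>, \<open>a \<in> I\<close>, contribute, so the patch at parameter \<open>t\<close> is a convex combination of
  them with weights \<open>wt t a\<close>.  The ratio \<open>wt ty a / wt tx a\<close> increases strictly along the
  edge (its logarithm is affine in \<open>\<sigma> a\<close> with positive slope), hence the change of
  weights \<open>z = wt ty - wt tx\<close> changes sign only once.  If the patch took the same value at
  \<open>tx < ty\<close>, then \<open>\<Sum> z a = 0\<close> and \<open>\<Sum> z a f a = 0\<close>.  Weak compatibility says that every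
  control point \<open>f c\<close> off the edge sees the \<open>f a\<close> in monotone angular order, and a sign
  argument then puts all control points on one line, contradicting weak compatibility
  (compatibility provides \<open>f a0 \<noteq> f a1\<close>).
\<close>

lemma det2_zero_iff:
  "det2 u v = 0 \<longleftrightarrow> u = 0 \<or> v = 0 \<or> (\<exists>c. v = c *\<^sub>R u)"
proof
  assume h: "det2 u v = 0"
  show "u = 0 \<or> v = 0 \<or> (\<exists>c. v = c *\<^sub>R u)"
  proof (cases "fst u = 0")
    case True
    show ?thesis
    proof (cases "snd u = 0")
      case True with \<open>fst u = 0\<close> show ?thesis by (simp add: prod_eq_iff)
    next
      case False
      have "fst v = 0" using h True False by (simp add: det2_def)
      then have "v = (snd v / snd u) *\<^sub>R u" using True False by (simp add: prod_eq_iff)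
      then show ?thesis by blast
    qed
  next
    case False
    have "snd v = (fst v / fst u) * snd u" using h False by (simp add: det2_def field_simps)
    then have "v = (fst v / fst u) *\<^sub>R u" using False by (simp add: prod_eq_iff)
    then show ?thesis by blast
  qed
next
  assume "u = 0 \<or> v = 0 \<or> (\<exists>c. v = c *\<^sub>R u)"
  then show "det2 u v = 0" by (auto simp: det2_def)
qed

lemma aff_indep3_iff: "aff_indep3 p0 p1 p2 \<longleftrightarrow> det2 (p1 - p0) (p2 - p0) \<noteq> 0"
proof -
  have "aff_indep3 p0 p1 p2 \<longleftrightarrow> \<not> collinear {p1, p0, p2}"
    unfolding aff_indep3_def collinear_3_eq_affine_dependent
    by (auto simp: insert_commute)
  also have "collinear {p1, p0, p2} \<longleftrightarrow> collinear {0, p1 - p0, p2 - p0}"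
    by (rule collinear_3) (simp add: NO_MATCH_def)
  also have "\<dots> \<longleftrightarrow> det2 (p1 - p0) (p2 - p0) = 0"
    unfolding collinear_lemma det2_zero_iff by simp
  finally show ?thesis by simp
qed

lemma det2_parallel: "u \<noteq> 0 \<Longrightarrow> det2 u v = 0 \<Longrightarrow> \<exists>k. v = k *\<^sub>R u"
  using det2_zero_iff[of u v] by (metis scale_zero_left)

lemma det2_swap: "det2 v u = - det2 u v"
  by (simp add: det2_def)

lemma det2_sum_left: "det2 (\<Sum>i\<in>S. g i) v = (\<Sum>i\<in>S. det2 (g i) v)"
  by (simp add: det2_def fst_sum snd_sum sum_distrib_right sum_subtractf)

lemma det2_sum_right: "det2 v (\<Sum>i\<in>S. g i) = (\<Sum>i\<in>S. det2 v (g i))"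
  by (simp add: det2_def fst_sum snd_sum sum_distrib_left sum_subtractf)

lemma det2_scaleR_left [simp]: "det2 (c *\<^sub>R u) v = c * det2 u v"
  and det2_scaleR_right [simp]: "det2 u (c *\<^sub>R v) = c * det2 u v"
  by (simp_all add: det2_def algebra_simps)

definition side :: "real \<times> real \<Rightarrow> real \<times> real \<Rightarrow> real \<times> real \<Rightarrow> real" where
  "side p q x = det2 (q - p) (x - p)"

lemma side_swap: "side q p x = - side p q x"
  and side_rotate: "side p q x = side x p q"
  and side_left: "side p q p = 0"
  by (simp_all add: side_def det2_def algebra_simps)

lemma side_zero_on_line:
  assumes "p \<noteq> q" "side p q x = 0"
  obtains k where "x = p + k *\<^sub>R (q - p)"
proof -
  obtain k where "x - p = k *\<^sub>R (q - p)"
    using det2_parallel[of "q - p" "x - p"] assms by (auto simp: side_def)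
  then show ?thesis using that by (metis add.commute diff_add_cancel)
qed

lemma side_collinear:
  assumes "p \<noteq> q" "side p q x = 0" "side p q y = 0" "side p q u = 0"
  shows "det2 (y - x) (u - x) = 0"
proof -
  obtain kx ky ku where x: "x = p + kx *\<^sub>R (q - p)" and y: "y = p + ky *\<^sub>R (q - p)"
    and u: "u = p + ku *\<^sub>R (q - p)"
    using side_zero_on_line assms by metis
  show ?thesis unfolding x y u by (simp add: det2_def algebra_simps)
qed

lemma side_from_line_point:
  assumes "c = p + k *\<^sub>R (q - p)"
  shows "det2 (p - c) (x - c) = - k * side p q x"
    and "det2 (q - c) (x - c) = (1 - k) * side p q x"
  unfolding assms by (simp_all add: side_def det2_def algebra_simps)

text \<open>The weights \<open>z\<close> are not all zero, sum to zero, their weighted sum of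
  the \<open>f a\<close> vanishes, and they change sign only once along \<open>\<sigma>\<close> (negative weights come
  first, then zero weights, then positive ones).  From every point \<open>f c\<close> of a nonempty
  family \<open>c \<in> C\<close>, the points \<open>f a\<close> are seen in monotone angular order.\<close>
locale sign_change =
  fixes I C :: "'x set" and \<sigma> z :: "'x \<Rightarrow> real" and f :: "'x \<Rightarrow> real \<times> real"
    and a0 a1 :: 'x
  assumes finite_I: "finite I"
    and sum_z: "(\<Sum>a\<in>I. z a) = 0"
    and sum_zf: "(\<Sum>a\<in>I. z a *\<^sub>R f a) = 0"
    and sign_order: "\<And>a b. a \<in> I \<Longrightarrow> b \<in> I \<Longrightarrow> z a \<le> 0 \<Longrightarrow> 0 \<le> z b \<Longrightarrow> z a < z b \<Longrightarrow>
        \<sigma> a < \<sigma> b"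
    and nontrivial: "\<exists>a\<in>I. z a \<noteq> 0"
    and a0: "a0 \<in> I" and a1: "a1 \<in> I"
    and a0_first: "\<And>a. a \<in> I \<Longrightarrow> a \<noteq> a0 \<Longrightarrow> \<sigma> a0 < \<sigma> a"
    and a1_last: "\<And>a. a \<in> I \<Longrightarrow> a \<noteq> a1 \<Longrightarrow> \<sigma> a < \<sigma> a1"
    and ends_distinct: "f a0 \<noteq> f a1"
    and monotone_view: "\<And>c. c \<in> C \<Longrightarrow> \<exists>\<epsilon>. \<epsilon> \<noteq> 0 \<and>
        (\<forall>a\<in>I. \<forall>b\<in>I. \<sigma> a < \<sigma> b \<longrightarrow> 0 \<le> \<epsilon> * det2 (f a - f c) (f b - f c))"
    and C_nonempty: "C \<noteq> {}"
begin

text \<open>The first point carries negative weight: otherwise the sign order forces all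
  weights to be nonnegative, hence zero.\<close>
lemma first_negative: "z a0 < 0"
proof (rule ccontr)
  assume a0_nonneg: "\<not> z a0 < 0"
  have "0 \<le> z a" if a: "a \<in> I" for a
  proof (rule ccontr)
    assume "\<not> 0 \<le> z a"
    then have "a \<noteq> a0" "\<sigma> a < \<sigma> a0" using sign_order[OF a a0] a0_nonneg by auto
    then show False using a0_first[OF a] by simp
  qed
  then have "\<forall>a\<in>I. z a = 0" using sum_nonneg_eq_0_iff[OF finite_I] sum_z by blast
  then show False using nontrivial by blast
qed

lemma reversed: "sign_change I C (\<lambda>a. - \<sigma> a) (\<lambda>a. - z a) f a1 a0"
proof
  show "finite I" by (rule finite_I)
  show "(\<Sum>a\<in>I. - z a) = 0" using sum_z by (simp add: sum_negf)
  show "(\<Sum>a\<in>I. (- z a) *\<^sub>R f a) = 0" using sum_zf by (simp add: sum_negf)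
  show "- \<sigma> a < - \<sigma> b"
    if "a \<in> I" "b \<in> I" "- z a \<le> 0" "0 \<le> - z b" "- z a < - z b" for a b
    using sign_order[of b a] that by simp
  show "\<exists>a\<in>I. - z a \<noteq> 0" using nontrivial by simp
  show "a1 \<in> I" "a0 \<in> I" using a0 a1 by auto
  show "- \<sigma> a1 < - \<sigma> a" if "a \<in> I" "a \<noteq> a1" for a using a1_last that by simp
  show "- \<sigma> a < - \<sigma> a0" if "a \<in> I" "a \<noteq> a0" for a using a0_first that by simp
  show "f a1 \<noteq> f a0" using ends_distinct by simp
  show "C \<noteq> {}" by (rule C_nonempty)
  fix c assume c: "c \<in> C"
  obtain \<epsilon> where \<epsilon>: "\<epsilon> \<noteq> 0"
    and view: "\<forall>a\<in>I. \<forall>b\<in>I. \<sigma> a < \<sigma> b \<longrightarrow> 0 \<le> \<epsilon> * det2 (f a - f c) (f b - f c)"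
    using monotone_view[OF c] by blast
  have "0 \<le> - \<epsilon> * det2 (f a - f c) (f b - f c)" if "a \<in> I" "b \<in> I" "- \<sigma> a < - \<sigma> b" for a b
    using view that det2_swap[of "f a - f c" "f b - f c"] by fastforce
  then show "\<exists>\<epsilon>. \<epsilon> \<noteq> 0 \<and>
      (\<forall>a\<in>I. \<forall>b\<in>I. - \<sigma> a < - \<sigma> b \<longrightarrow> 0 \<le> \<epsilon> * det2 (f a - f c) (f b - f c))"
    using \<epsilon> by (intro exI[of _ "- \<epsilon>"]) auto
qed

lemma last_positive: "0 < z a1"
  using sign_change.first_negative[OF reversed] by simp

text \<open>Since the weights sum to zero, the weighted sum may be taken about any origin.\<close>
lemma centered_sum: "(\<Sum>a\<in>I. z a *\<^sub>R (f a - q)) = 0"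
  by (simp add: scaleR_diff_right sum_subtractf sum_zf scaleR_sum_left[symmetric] sum_z)

text \<open>The signed distance to any line is affine, so its \<open>z\<close>-weighted sum vanishes.\<close>
lemma weighted_side: "(\<Sum>a\<in>I. z a * side p q (f a)) = 0"
proof -
  have "(\<Sum>a\<in>I. z a * side p q (f a)) = det2 (q - p) (\<Sum>a\<in>I. z a *\<^sub>R (f a - p))"
    by (simp add: side_def det2_sum_right)
  then show ?thesis by (simp add: centered_sum det2_def)
qed

text \<open>Seen from \<open>f c\<close>, \<open>c \<in> C\<close>, a negatively weighted point and a positively weighted one
  are aligned: expanding \<open>det2 (\<Sum> z\<^sup>- u) (\<Sum> z\<^sup>+ u) = 0\<close> bilinearly gives a sum of terms
  of one sign.\<close>
lemma cross_pairs_aligned: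
  assumes c: "c \<in> C" and ab: "a \<in> I" "b \<in> I" "z a < 0" "0 < z b"
  shows "det2 (f a - f c) (f b - f c) = 0"
proof -
  obtain \<epsilon> where \<epsilon>: "\<epsilon> \<noteq> 0"
    and view: "\<forall>a\<in>I. \<forall>b\<in>I. \<sigma> a < \<sigma> b \<longrightarrow> 0 \<le> \<epsilon> * det2 (f a - f c) (f b - f c)"
    using monotone_view[OF c] by blast
  define u where "u x = f x - f c" for x
  define neg where "neg x = min (z x) 0" for x
  define pos where "pos x = max (z x) 0" for x
  have "neg x + pos x = z x" for x by (simp add: neg_def pos_def)
  then have "(\<Sum>x\<in>I. neg x *\<^sub>R u x) + (\<Sum>x\<in>I. pos x *\<^sub>R u x) = (\<Sum>x\<in>I. z x *\<^sub>R u x)"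
    by (simp add: sum.distrib[symmetric] scaleR_add_left[symmetric] del: scaleR_add_left)
  then have split: "(\<Sum>x\<in>I. pos x *\<^sub>R u x) = - (\<Sum>x\<in>I. neg x *\<^sub>R u x)"
    using centered_sum[of "f c"] by (simp add: u_def eq_neg_iff_add_eq_0 add.commute)
  define g where "g p = - \<epsilon> * (neg (fst p) * pos (snd p) * det2 (u (fst p)) (u (snd p)))" for p
  have "(\<Sum>(x, y)\<in>I \<times> I. neg x * pos y * det2 (u x) (u y))
      = (\<Sum>x\<in>I. neg x * (\<Sum>y\<in>I. pos y * det2 (u x) (u y)))"
    by (simp add: sum.cartesian_product[symmetric] sum_distrib_left mult.assoc)
  also have "\<dots> = (\<Sum>x\<in>I. neg x * det2 (u x) (\<Sum>y\<in>I. pos y *\<^sub>R u y))"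
    by (simp only: det2_sum_right det2_scaleR_right)
  also have "\<dots> = det2 (\<Sum>x\<in>I. neg x *\<^sub>R u x) (\<Sum>y\<in>I. pos y *\<^sub>R u y)"
    by (simp only: det2_sum_left det2_scaleR_left)
  also have "\<dots> = 0" by (simp add: split det2_def)
  finally have "(\<Sum>(x, y)\<in>I \<times> I. neg x * pos y * det2 (u x) (u y)) = 0" .
  moreover have "sum g (I \<times> I) = - \<epsilon> * (\<Sum>(x, y)\<in>I \<times> I. neg x * pos y * det2 (u x) (u y))"
    by (simp add: g_def sum_distrib_left case_prod_unfold)
  ultimately have sum0: "sum g (I \<times> I) = 0" by simp
  have terms: "0 \<le> g p" if "p \<in> I \<times> I" for p
  proof (cases "z (fst p) < 0 \<and> 0 < z (snd p)")
    case True
    then have view_p: "0 \<le> \<epsilon> * det2 (u (fst p)) (u (snd p))"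
      using view sign_order[of "fst p" "snd p"] that by (auto simp: u_def)
    have weight_p: "0 \<le> - (neg (fst p) * pos (snd p))"
      using True by (simp add: neg_def pos_def mult_neg_pos less_imp_le)
    have "0 \<le> (- (neg (fst p) * pos (snd p))) * (\<epsilon> * det2 (u (fst p)) (u (snd p)))"
      by (rule mult_nonneg_nonneg[OF weight_p view_p])
    then show ?thesis by (simp add: g_def ac_simps)
  qed (auto simp: g_def neg_def pos_def)
  have "\<forall>p\<in>I \<times> I. g p = 0"
    using sum_nonneg_eq_0_iff[OF finite_cartesian_product[OF finite_I finite_I] terms] sum0
    by (rule iffD1)
  then have "g (a, b) = 0" using ab by blast
  then show ?thesis using \<epsilon> ab by (simp add: g_def neg_def pos_def u_def)
qed

text \<open>Seen from \<open>f c\<close>, \<open>c \<in> C\<close>, every zero-weight point is aligned with every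
  weighted point: the terms of \<open>det2 (\<Sum> z u) (u b) = 0\<close> all have the same sign.\<close>
lemma zero_weight_aligned:
  assumes c: "c \<in> C" and ab: "a \<in> I" "b \<in> I" "z a \<noteq> 0" "z b = 0"
  shows "det2 (f a - f c) (f b - f c) = 0"
proof -
  obtain \<epsilon> where \<epsilon>: "\<epsilon> \<noteq> 0"
    and view: "\<forall>a\<in>I. \<forall>b\<in>I. \<sigma> a < \<sigma> b \<longrightarrow> 0 \<le> \<epsilon> * det2 (f a - f c) (f b - f c)"
    using monotone_view[OF c] by blast
  define D where "D x = det2 (f x - f c) (f b - f c)" for x
  have "(\<Sum>x\<in>I. z x * D x) = det2 (\<Sum>x\<in>I. z x *\<^sub>R (f x - f c)) (f b - f c)"
    by (simp add: D_def det2_sum_left)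
  also have "\<dots> = 0" by (simp add: centered_sum det2_def)
  finally have sum0: "(\<Sum>x\<in>I. - \<epsilon> * z x * D x) = 0"
    by (simp add: sum_negf mult.assoc flip: sum_distrib_left)
  have terms: "0 \<le> - \<epsilon> * z x * D x" if x: "x \<in> I" for x
  proof -
    consider "z x < 0" | "z x = 0" | "0 < z x" by linarith
    then show ?thesis
    proof cases
      case 1
      then have view_x: "0 \<le> \<epsilon> * D x"
        using view sign_order[OF x ab(2)] x ab by (simp add: D_def)
      have "0 \<le> - z x" using 1 by simp
      from mult_nonneg_nonneg[OF this view_x] have "0 \<le> (- z x) * (\<epsilon> * D x)" .
      then show ?thesis by (simp add: ac_simps)
    next
      case 3
      then have "0 \<le> \<epsilon> * det2 (f b - f c) (f x - f c)"
        using view sign_order[OF ab(2) x] x ab by simp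
      then have "\<epsilon> * D x \<le> 0" by (simp add: D_def det2_swap[of "f x - f c"])
      then have "0 \<le> - (\<epsilon> * D x)" by simp
      from mult_nonneg_nonneg[OF _ this] have "0 \<le> z x * (- (\<epsilon> * D x))" using 3 by simp
      then show ?thesis by (simp add: ac_simps)
    qed simp
  qed
  have "\<forall>x\<in>I. - \<epsilon> * z x * D x = 0"
    using sum_nonneg_eq_0_iff[OF finite_I terms] sum0 by (rule iffD1)
  then have "- \<epsilon> * z a * D a = 0" using ab by blast
  then show ?thesis using \<epsilon> ab by (simp add: D_def)
qed

abbreviation on_line :: "real \<times> real \<Rightarrow> bool" where
  "on_line x \<equiv> side (f a0) (f a1) x = 0"

text \<open>Every viewpoint \<open>f c\<close> is aligned with the negatively weighted \<open>f a0\<close> and the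
  positively weighted \<open>f a1\<close>, hence lies on their line.\<close>
lemma C_on_line: "c \<in> C \<Longrightarrow> on_line (f c)"
  using cross_pairs_aligned[OF _ a0 a1 first_negative last_positive] side_rotate[of "f a0"]
  by (simp add: side_def)

lemma C_point_on_line:
  assumes "c \<in> C" obtains k where "f c = f a0 + k *\<^sub>R (f a1 - f a0)"
  using side_zero_on_line[OF ends_distinct C_on_line[OF assms]] by blast

text \<open>Pick \<open>c \<in> C\<close>.  If \<open>f c \<noteq> f a1\<close> this
  follows from alignment with \<open>a1\<close>; otherwise the positively weighted points are on the
  line, and the angular order seen from \<open>f c = f a1\<close> makes all terms of the vanishing sum
  \<open>\<Sum> z a * side (f a)\<close> one-signed.\<close>
lemma negative_on_line:
  assumes a: "a \<in> I" "z a < 0"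
  shows "on_line (f a)"
proof -
  obtain c where c: "c \<in> C" using C_nonempty by blast
  obtain k where k: "f c = f a0 + k *\<^sub>R (f a1 - f a0)" using C_point_on_line[OF c] .
  note from_c = side_from_line_point[OF k]
  show ?thesis
  proof (cases "k = 1")
    case False
    have "det2 (f a1 - f c) (f a - f c) = 0"
      using cross_pairs_aligned[OF c a(1) a1 a(2) last_positive] det2_swap[of "f a1 - f c"] by simp
    then show ?thesis using from_c(2) False by simp
  next
    case True
    have pos_on_line: "on_line (f b)" if "b \<in> I" "0 < z b" for b
      using cross_pairs_aligned[OF c a0 that(1) first_negative that(2)] from_c(1) True by simp
    obtain \<epsilon> where \<epsilon>: "\<epsilon> \<noteq> 0"
      and view: "\<forall>a\<in>I. \<forall>b\<in>I. \<sigma> a < \<sigma> b \<longrightarrow> 0 \<le> \<epsilon> * det2 (f a - f c) (f b - f c)"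
      using monotone_view[OF c] by blast
    have terms: "0 \<le> \<epsilon> * z b * side (f a0) (f a1) (f b)" if b: "b \<in> I" for b
    proof -
      consider "b = a0" | "z b < 0" "b \<noteq> a0" | "z b = 0" | "0 < z b" by linarith
      then show ?thesis
      proof cases
        case 2
        then have "0 \<le> \<epsilon> * det2 (f a0 - f c) (f b - f c)"
          using view a0_first[OF b 2(2)] a0 b by blast
        then have "\<epsilon> * side (f a0) (f a1) (f b) \<le> 0" using from_c(1) True by simp
        then show ?thesis
          using 2 mult_nonpos_nonpos[of "z b" "\<epsilon> * side (f a0) (f a1) (f b)"] by (simp add: ac_simps)
      qed (simp_all add: side_left pos_on_line b)
    qed
    have "(\<Sum>b\<in>I. \<epsilon> * z b * side (f a0) (f a1) (f b)) = 0"
      using weighted_side by (simp add: sum_distrib_left[symmetric] mult.assoc)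
    with sum_nonneg_eq_0_iff[OF finite_I terms]
    have "\<forall>b\<in>I. \<epsilon> * z b * side (f a0) (f a1) (f b) = 0" by (rule iffD1)
    then have "\<epsilon> * z a * side (f a0) (f a1) (f a) = 0" using a by blast
    then show ?thesis using \<epsilon> a by simp
  qed
qed

lemma positive_on_line: "a \<in> I \<Longrightarrow> 0 < z a \<Longrightarrow> on_line (f a)"
  using sign_change.negative_on_line[OF reversed, of a] side_swap[of "f a1" "f a0"] by simp

text \<open>Zero-weight points lie on the line, being aligned from \<open>f c\<close> with both \<open>f a0\<close>
  and \<open>f a1\<close>.\<close>
lemma zero_on_line:
  assumes a: "a \<in> I" "z a = 0"
  shows "on_line (f a)"
proof -
  obtain c where c: "c \<in> C" using C_nonempty by blast
  obtain k where k: "f c = f a0 + k *\<^sub>R (f a1 - f a0)" using C_point_on_line[OF c] .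
  have "- k * side (f a0) (f a1) (f a) = 0" "(1 - k) * side (f a0) (f a1) (f a) = 0"
    using zero_weight_aligned[OF c a0 a(1) _ a(2)] zero_weight_aligned[OF c a1 a(1) _ a(2)]
      side_from_line_point[OF k] first_negative last_positive by auto
  then show ?thesis by auto
qed

theorem degenerate:
  assumes "p \<in> I \<union> C" "q \<in> I \<union> C" "r \<in> I \<union> C"
  shows "det2 (f q - f p) (f r - f p) = 0"
proof -
  have "on_line (f x)" if x: "x \<in> I \<union> C" for x
  proof (cases "x \<in> I")
    case True
    consider "z x < 0" | "z x = 0" | "0 < z x" by linarith
    then show ?thesis using True negative_on_line zero_on_line positive_on_line by cases
  qed (use x C_on_line in blast)
  then show ?thesis using side_collinear[OF ends_distinct] assms by blast
qed

end

lemma rp_inj: "rp a = rp b \<Longrightarrow> a = b"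
  by (auto simp: rp_def prod_eq_iff)

lemma hval_rp: "hval (\<alpha>, \<beta>, c) (rp p) = of_int (\<alpha> * fst p + \<beta> * snd p + c)"
  by (simp add: hval_def rp_def)

lemma hval_affine: "hval h ((1 - u) *\<^sub>R x + u *\<^sub>R y) = (1 - u) * hval h x + u * hval h y"
  by (cases h) (simp add: hval_def algebra_simps)

lemma primitive_normal:
  fixes P Q :: int and n :: "real \<times> real"
  assumes PQ: "P \<noteq> 0 \<or> Q \<noteq> 0" and n: "n \<noteq> 0"
    and orth: "fst n * of_int P + snd n * of_int Q = 0"
  obtains \<alpha> \<beta> :: int and k :: real
  where "gcd \<alpha> \<beta> = 1" "0 < k" "n = k *\<^sub>R (of_int \<alpha>, of_int \<beta>)"
proof -
  obtain t where t: "t \<noteq> 0" "n = t *\<^sub>R (of_int Q, - of_int P)"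
  proof (cases "P = 0")
    case True
    then have "Q \<noteq> 0" "snd n = 0" using PQ orth by auto
    then show ?thesis using n by (intro that[of "fst n / of_int Q"]) (auto simp: prod_eq_iff True)
  next
    case False
    have f: "fst n = (- snd n / of_int P) * of_int Q"
      using orth False by (simp add: field_simps)
    then have "snd n \<noteq> 0" using n by (auto simp: prod_eq_iff)
    then show ?thesis using False f by (intro that[of "- snd n / of_int P"]) (auto simp: prod_eq_iff)
  qed
  define g where "g = gcd P Q"
  have g: "0 < g" using PQ by (simp add: g_def)
  define \<alpha> where "\<alpha> = Q div g"
  define \<beta> where "\<beta> = - (P div g)"
  have coprime: "gcd \<alpha> \<beta> = 1"
  proof -
    have "coprime (P div g) (Q div g)" unfolding g_def by (rule div_gcd_coprime[OF PQ])
    then show ?thesis by (simp add: \<alpha>_def \<beta>_def coprime_iff_gcd_eq_1 gcd.commute)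
  qed
  have "Q = g * \<alpha>" "P = - g * \<beta>" unfolding \<alpha>_def \<beta>_def g_def by simp_all
  then have n_eq: "n = (t * of_int g) *\<^sub>R (of_int \<alpha>, of_int \<beta>)" using t by simp
  show ?thesis
  proof (cases "0 < t * of_int g")
    case True
    then show ?thesis by (rule that[OF coprime _ n_eq])
  next
    case False
    moreover have "t * of_int g \<noteq> 0" using t g by simp
    ultimately have "0 < - (t * of_int g)" by linarith
    moreover have "n = (- (t * of_int g)) *\<^sub>R (of_int (- \<alpha>), of_int (- \<beta>))" using n_eq by simp
    ultimately show ?thesis using that coprime by (metis gcd_neg1_int gcd_neg2_int)
  qed
qed

lemma primitive_normal_bound:
  fixes \<alpha> \<beta> P Q :: int
  assumes cop: "gcd \<alpha> \<beta> = 1" and orth: "\<alpha> * P + \<beta> * Q = 0" and PQ: "P \<noteq> 0 \<or> Q \<noteq> 0"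
  shows "\<bar>\<alpha>\<bar> \<le> \<bar>Q\<bar>" and "\<bar>\<beta>\<bar> \<le> \<bar>P\<bar>"
proof -
  have cop': "coprime \<alpha> \<beta>" using cop by (simp add: coprime_iff_gcd_eq_1)
  show "\<bar>\<alpha>\<bar> \<le> \<bar>Q\<bar>"
  proof (cases "Q = 0")
    case False
    have "\<alpha> dvd \<beta> * Q" using orth by (metis add.commute add_eq_0_iff dvd_minus_iff dvd_triv_left)
    then have "\<alpha> dvd Q" using cop' by (simp add: coprime_dvd_mult_right_iff)
    then show ?thesis by (rule dvd_imp_le_int[OF False])
  qed (use orth PQ in simp)
  show "\<bar>\<beta>\<bar> \<le> \<bar>P\<bar>"
  proof (cases "P = 0")
    case False
    have "\<beta> dvd \<alpha> * P" using orth by (metis add_eq_0_iff dvd_minus_iff dvd_triv_left)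
    then have "\<beta> dvd P" using cop' by (simp add: coprime_dvd_mult_right_iff coprime_commute)
    then show ?thesis by (rule dvd_imp_le_int[OF False])
  qed (use orth PQ in simp)
qed

locale lattice_polygon =
  fixes A :: "(int \<times> int) set"
  assumes finite_A: "finite A" and dim_2: "aff_dim (Delta A) = 2"
begin

lemma polytope_Delta: "polytope (Delta A)"
  unfolding Delta_def by (rule polytope_convex_hull) (simp add: finite_A)

lemma rp_in_Delta: "a \<in> A \<Longrightarrow> rp a \<in> Delta A"
  unfolding Delta_def by (rule hull_inc) simp

lemma edge_segment:
  assumes "is_edge (Delta A) e"
  obtains p q where "p \<in> A" "q \<in> A" "p \<noteq> q" "e = closed_segment (rp p) (rp q)"
    "rp p extreme_point_of (Delta A)" "rp q extreme_point_of (Delta A)"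
proof -
  have face: "e face_of (Delta A)" and dim: "aff_dim e = 1" using assms by (auto simp: is_edge_def)
  have "polytope e" by (rule face_of_polytope_polytope[OF polytope_Delta face])
  then have "compact e" "convex e" by (auto simp: polytope_imp_compact polytope_imp_convex)
  moreover have "e \<noteq> {}" "collinear e" using dim by (auto simp: collinear_aff_dim)
  ultimately obtain v0 v1 where e: "e = closed_segment v0 v1"
    using compact_convex_collinear_segment by blast
  have ne: "v0 \<noteq> v1" using dim e by auto
  have vertex: "v extreme_point_of (Delta A) \<and> v \<in> rp ` A" if "v = v0 \<or> v = v1" for v
  proof -
    have "v extreme_point_of e" using that e by (auto simp: extreme_point_of_segment)
    then have "v extreme_point_of (Delta A)" using extreme_point_of_face[OF face] by blast
    moreover then have "v \<in> rp ` A" unfolding Delta_def by (rule extreme_point_of_convex_hull)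
    ultimately show ?thesis by blast
  qed
  obtain p q where pq: "p \<in> A" "v0 = rp p" "q \<in> A" "v1 = rp q" using vertex by blast
  show ?thesis by (rule that[of p q]) (use pq e ne vertex in auto)
qed

lemma edge_functional:
  assumes edge: "is_edge (Delta A) e"
  obtains h where "h \<in> edge_ineqs A" "\<forall>x\<in>e. hval h x = 0"
    "\<forall>x\<in>Delta A. x \<notin> e \<longrightarrow> 0 < hval h x"
proof -
  have face: "e face_of (Delta A)" and dim: "aff_dim e = 1" using edge by (auto simp: is_edge_def)
  obtain n b where below: "Delta A \<subseteq> {x. n \<bullet> x \<le> b}" and e: "e = Delta A \<inter> {x. n \<bullet> x = b}"
    using exposed_face_of_polyhedron[OF polytope_imp_polyhedron[OF polytope_Delta]] face
    unfolding exposed_face_of_def by blast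
  obtain p q where pq: "p \<in> A" "q \<in> A" "p \<noteq> q" "e = closed_segment (rp p) (rp q)"
    using edge_segment[OF edge] by metis
  then have np: "n \<bullet> rp p = b" and nq: "n \<bullet> rp q = b" using e by auto
  have "n \<noteq> 0"
  proof
    assume "n = 0"
    then have "e = Delta A \<or> e = {}" using e by auto
    then show False using dim dim_2 by auto
  qed
  moreover have "fst n * of_int (fst q - fst p) + snd n * of_int (snd q - snd p) = 0"
    using np nq by (cases n) (simp add: rp_def algebra_simps)
  moreover have "fst q - fst p \<noteq> 0 \<or> snd q - snd p \<noteq> 0" using pq(3) by (auto simp: prod_eq_iff)
  ultimately obtain \<alpha> \<beta> k where cop: "gcd \<alpha> \<beta> = 1" and k: "0 < k"
    and n: "n = k *\<^sub>R (of_int \<alpha>, of_int \<beta>)"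
    using primitive_normal by metis
  define h where "h = (- \<alpha>, - \<beta>, \<alpha> * fst p + \<beta> * snd p)"
  have h_eq: "hval h x = (b - n \<bullet> x) / k" for x
    using k np unfolding h_def n by (cases x) (simp add: hval_def rp_def field_simps)
  have "\<forall>x\<in>Delta A. 0 \<le> hval h x" using below k by (auto simp: h_eq)
  moreover have zero: "\<forall>x\<in>e. hval h x = 0" using e by (simp add: h_eq)
  ultimately have "h \<in> edge_ineqs A" using cop edge by (auto simp: edge_ineqs_def h_def)
  moreover have "\<forall>x\<in>Delta A. x \<notin> e \<longrightarrow> 0 < hval h x"
    using below e k by (fastforce simp: h_eq)
  ultimately show ?thesis using that zero by blast
qed

lemma vertex_separated:
  assumes v: "v extreme_point_of (Delta A)" and p: "p \<in> Delta A" "p \<noteq> v"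
  obtains e where "is_edge (Delta A) e" "v \<in> e" "p \<notin> e"
proof -
  have face: "{v} face_of Delta A" using v by (simp add: face_of_singleton)
  have "{v} \<noteq> Delta A" using dim_2 by (metis aff_dim_sing zero_neq_numeral)
  then have "{v} = \<Inter>{F. F facet_of Delta A \<and> {v} \<subseteq> F}"
    using face_of_polyhedron[OF polytope_imp_polyhedron[OF polytope_Delta] face] by blast
  then obtain F where F: "F facet_of Delta A" "v \<in> F" "p \<notin> F" using p by blast
  have "is_edge (Delta A) F" using F(1) dim_2 by (simp add: facet_of_def is_edge_def)
  then show ?thesis using that F by blast
qed

text \<open>There are finitely many edge functionals: their coefficients are bounded in terms of
  the lattice points of \<open>A\<close>.\<close>
lemma finite_edge_ineqs: "finite (edge_ineqs A)"
proof -
  define K where "K = Max ((\<lambda>p. \<bar>fst p\<bar> + \<bar>snd p\<bar>) ` A)"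
  have K: "\<bar>fst p\<bar> \<le> K" "\<bar>snd p\<bar> \<le> K" if "p \<in> A" for p
  proof -
    have "\<bar>fst p\<bar> + \<bar>snd p\<bar> \<le> K" unfolding K_def using finite_A that by (intro Max_ge) auto
    then show "\<bar>fst p\<bar> \<le> K" "\<bar>snd p\<bar> \<le> K" by auto
  qed
  define R where "R = 4 * K * K + 2 * K"
  have "edge_ineqs A \<subseteq> {-R..R} \<times> {-R..R} \<times> {-R..R}"
  proof
    fix h assume h: "h \<in> edge_ineqs A"
    obtain \<alpha> \<beta> c where hh: "h = (\<alpha>, \<beta>, c)" by (cases h)
    from h obtain e where cop: "gcd \<alpha> \<beta> = 1" and edge: "is_edge (Delta A) e"
      and zero: "\<forall>x\<in>e. hval h x = 0"
      unfolding edge_ineqs_def hh by auto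
    obtain p q where pq: "p \<in> A" "q \<in> A" "p \<noteq> q" "e = closed_segment (rp p) (rp q)"
      using edge_segment[OF edge] by metis
    have "hval h (rp p) = 0" "hval h (rp q) = 0" using zero pq by auto
    then have zp: "\<alpha> * fst p + \<beta> * snd p + c = 0" and zq: "\<alpha> * fst q + \<beta> * snd q + c = 0"
      by (simp_all add: hh hval_rp del: of_int_add of_int_mult)
    have "\<alpha> * (fst q - fst p) + \<beta> * (snd q - snd p) = 0" using zp zq by (simp add: algebra_simps)
    moreover have "fst q - fst p \<noteq> 0 \<or> snd q - snd p \<noteq> 0" using pq(3) by (auto simp: prod_eq_iff)
    ultimately have "\<bar>\<alpha>\<bar> \<le> \<bar>snd q - snd p\<bar>" "\<bar>\<beta>\<bar> \<le> \<bar>fst q - fst p\<bar>"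
      using primitive_normal_bound[OF cop] by blast+
    then have ab: "\<bar>\<alpha>\<bar> \<le> 2 * K" "\<bar>\<beta>\<bar> \<le> 2 * K" using K[OF pq(1)] K[OF pq(2)] by auto
    have K0: "0 \<le> K" using K[OF pq(1)] by linarith
    have "\<bar>\<alpha> * fst p\<bar> \<le> 2 * K * K" "\<bar>\<beta> * snd p\<bar> \<le> 2 * K * K"
      unfolding abs_mult using ab K[OF pq(1)] K0 by (auto intro: mult_mono)
    then have "\<bar>c\<bar> \<le> 4 * K * K" using zp by linarith
    moreover have "0 \<le> K * K" using K0 by simp
    ultimately show "h \<in> {-R..R} \<times> {-R..R} \<times> {-R..R}"
      using ab K0 unfolding R_def hh by (simp add: abs_le_iff)
  qed
  then show ?thesis by (rule finite_subset) simp
qed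

end

context lattice_polygon
begin

lemma edge_ineq_nonneg: "h \<in> edge_ineqs A \<Longrightarrow> x \<in> Delta A \<Longrightarrow> 0 \<le> hval h x"
  unfolding edge_ineqs_def by auto

lemma bernstein_nonneg: "x \<in> Delta A \<Longrightarrow> 0 \<le> bernstein A a x"
  unfolding bernstein_def using edge_ineq_nonneg by (intro prod_nonneg) auto

text \<open>At a lattice point of the polygon an edge functional takes a nonnegative integer
  value, so the exponent \<open>nat \<lfloor>h(a)\<rfloor>\<close> in \<open>bernstein\<close> is exactly \<open>h(a)\<close>.\<close>
lemma edge_ineq_exponent:
  assumes "h \<in> edge_ineqs A" "a \<in> A"
  shows "real (nat \<lfloor>hval h (rp a)\<rfloor>) = hval h (rp a)"
proof -
  obtain \<alpha> \<beta> c where h: "h = (\<alpha>, \<beta>, c)" by (cases h)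
  define m where "m = \<alpha> * fst a + \<beta> * snd a + c"
  have m: "hval h (rp a) = of_int m" unfolding h hval_rp m_def ..
  have "0 \<le> hval h (rp a)" using edge_ineq_nonneg[OF assms(1) rp_in_Delta[OF assms(2)]] .
  then show ?thesis unfolding m by simp
qed

lemma bernstein_zero:
  assumes "h \<in> edge_ineqs A" "a \<in> A" "hval h x = 0" "0 < hval h (rp a)"
  shows "bernstein A a x = 0"
proof -
  have "nat \<lfloor>hval h (rp a)\<rfloor> \<noteq> 0" using edge_ineq_exponent[OF assms(1,2)] assms(4) by auto
  then have "hval h x ^ nat \<lfloor>hval h (rp a)\<rfloor> = 0" using assms(3) by simp
  then show ?thesis unfolding bernstein_def using finite_edge_ineqs assms(1)
    by (metis (no_types, lifting) prod_zero_iff)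
qed

lemma bernstein_pos:
  assumes "\<And>h. h \<in> edge_ineqs A \<Longrightarrow> 0 < hval h x \<or> hval h (rp a) = 0"
  shows "0 < bernstein A a x"
  unfolding bernstein_def
proof (rule prod_pos)
  fix h assume "h \<in> edge_ineqs A"
  then show "0 < hval h x ^ nat \<lfloor>hval h (rp a)\<rfloor>" using assms by fastforce
qed

lemma ln_bernstein:
  assumes a: "a \<in> A" and pos: "\<And>h. h \<in> edge_ineqs A \<Longrightarrow> 0 < hval h x \<or> hval h (rp a) = 0"
  shows "ln (bernstein A a x) = (\<Sum>h\<in>edge_ineqs A. hval h (rp a) * ln (hval h x))"
proof -
  have factor_pos: "0 < hval h x ^ nat \<lfloor>hval h (rp a)\<rfloor>" if "h \<in> edge_ineqs A" for h
    using pos[OF that] by auto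
  have "ln (bernstein A a x) = (\<Sum>h\<in>edge_ineqs A. ln (hval h x ^ nat \<lfloor>hval h (rp a)\<rfloor>))"
    unfolding bernstein_def by (rule ln_prod[OF finite_edge_ineqs]) (metis factor_pos less_irrefl)
  also have "\<dots> = (\<Sum>h\<in>edge_ineqs A. hval h (rp a) * ln (hval h x))"
  proof (rule sum.cong)
    fix h assume h: "h \<in> edge_ineqs A"
    show "ln (hval h x ^ nat \<lfloor>hval h (rp a)\<rfloor>) = hval h (rp a) * ln (hval h x)"
    proof (cases "0 < hval h x")
      case True
      then show ?thesis using edge_ineq_exponent[OF h a] by (simp add: ln_realpow)
    qed (use pos[OF h] in simp)
  qed simp
  finally show ?thesis .
qed

lemma bernstein_at_other_vertex:
  assumes "b \<in> A" "rp b extreme_point_of Delta A" "a \<in> A" "a \<noteq> b"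
  shows "bernstein A a (rp b) = 0"
proof -
  have "rp a \<noteq> rp b" using assms(4) rp_inj by blast
  then obtain e where e: "is_edge (Delta A) e" "rp b \<in> e" "rp a \<notin> e"
    using vertex_separated[OF assms(2) rp_in_Delta[OF assms(3)]] by metis
  obtain h where h: "h \<in> edge_ineqs A" "\<forall>x\<in>e. hval h x = 0"
    "\<forall>x\<in>Delta A. x \<notin> e \<longrightarrow> 0 < hval h x"
    using edge_functional[OF e(1)] by metis
  show ?thesis
    by (rule bernstein_zero[OF h(1) assms(3)]) (use h e rp_in_Delta[OF assms(3)] in auto)
qed

lemma bernstein_at_own_point: "b \<in> A \<Longrightarrow> 0 < bernstein A b (rp b)"
  using edge_ineq_nonneg rp_in_Delta by (intro bernstein_pos) (auto simp: order_le_less)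

lemma patch_at_vertex:
  assumes "b \<in> A" "rp b extreme_point_of Delta A" "\<forall>a\<in>A. 0 < w a"
  shows "toric_patch A w f (rp b) = f b"
proof -
  have zero: "bernstein A a (rp b) = 0" if "a \<in> A - {b}" for a
    using bernstein_at_other_vertex[OF assms(1,2)] that by blast
  define s where "s = w b * bernstein A b (rp b)"
  have "(\<Sum>a\<in>A. w a * bernstein A a (rp b)) = s"
    using sum.remove[OF finite_A assms(1), of "\<lambda>a. w a * bernstein A a (rp b)"] zero
    by (simp add: s_def)
  moreover have "(\<Sum>a\<in>A. (w a * bernstein A a (rp b)) *\<^sub>R f a) = s *\<^sub>R f b"
    using sum.remove[OF finite_A assms(1), of "\<lambda>a. (w a * bernstein A a (rp b)) *\<^sub>R f a"] zero
    by (simp add: s_def)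
  moreover have "0 < s" using assms bernstein_at_own_point by (simp add: s_def)
  ultimately show ?thesis unfolding toric_patch_def by simp
qed

end

locale polygon_edge = lattice_polygon +
  fixes \<delta> :: "(real \<times> real) set" and a0 a1 :: "int \<times> int"
  assumes edge: "is_edge (Delta A) \<delta>"
    and a0: "a0 \<in> A" and a1: "a1 \<in> A" and a0_ne_a1: "a0 \<noteq> a1"
    and edge_segment: "\<delta> = closed_segment (rp a0) (rp a1)"
    and vertex0: "rp a0 extreme_point_of Delta A"
    and vertex1: "rp a1 extreme_point_of Delta A"
begin

definition pt :: "real \<Rightarrow> real \<times> real" where
  "pt t = (1 - t) *\<^sub>R rp a0 + t *\<^sub>R rp a1"

definition param :: "real \<times> real \<Rightarrow> real" where
  "param x = ((x - rp a0) \<bullet> (rp a1 - rp a0)) / ((rp a1 - rp a0) \<bullet> (rp a1 - rp a0))"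

lemma param_pt [simp]: "param (pt t) = t"
proof -
  have "rp a1 - rp a0 \<noteq> 0" using a0_ne_a1 rp_inj by (metis eq_iff_diff_eq_0)
  moreover have "pt t - rp a0 = t *\<^sub>R (rp a1 - rp a0)" by (simp add: pt_def algebra_simps)
  ultimately show ?thesis by (simp add: param_def)
qed

lemma pt_0 [simp]: "pt 0 = rp a0" and pt_1 [simp]: "pt 1 = rp a1"
  by (simp_all add: pt_def)

lemma edge_points: "x \<in> \<delta> \<longleftrightarrow> (\<exists>t. 0 \<le> t \<and> t \<le> 1 \<and> x = pt t)"
  unfolding edge_segment pt_def in_segment by blast

lemma pt_in_Delta: "0 \<le> t \<Longrightarrow> t \<le> 1 \<Longrightarrow> pt t \<in> Delta A"
  using edge_points edge face_of_imp_subset unfolding is_edge_def by blast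

lemma hval_pt: "hval h (pt t) = (1 - t) * hval h (rp a0) + t * hval h (rp a1)"
  unfolding pt_def by (rule hval_affine)

definition I :: "(int \<times> int) set" where
  "I = {a \<in> A. rp a \<in> \<delta>}"

definition \<sigma> :: "int \<times> int \<Rightarrow> real" where
  "\<sigma> a = param (rp a)"

lemma finite_I: "finite I" and I_subset: "I \<subseteq> A"
  unfolding I_def using finite_A by auto

lemma a0_in_I: "a0 \<in> I" and a1_in_I: "a1 \<in> I"
  unfolding I_def using a0 a1 edge_segment by auto

lemma I_param: assumes "a \<in> I" shows "0 \<le> \<sigma> a" "\<sigma> a \<le> 1" "rp a = pt (\<sigma> a)"
  using assms unfolding I_def \<sigma>_def edge_points by auto

lemma \<sigma>_a0 [simp]: "\<sigma> a0 = 0" and \<sigma>_a1 [simp]: "\<sigma> a1 = 1"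
  using param_pt[of 0] param_pt[of 1] by (simp_all add: \<sigma>_def)

lemma \<sigma>_inj: "a \<in> I \<Longrightarrow> b \<in> I \<Longrightarrow> \<sigma> a = \<sigma> b \<Longrightarrow> a = b"
  using I_param(3) rp_inj by metis

lemma a0_first: "a \<in> I \<Longrightarrow> a \<noteq> a0 \<Longrightarrow> \<sigma> a0 < \<sigma> a"
  using I_param(1) \<sigma>_inj[OF _ a0_in_I] by (fastforce simp: order_le_less)

lemma a1_last: "a \<in> I \<Longrightarrow> a \<noteq> a1 \<Longrightarrow> \<sigma> a < \<sigma> a1"
  using I_param(2) \<sigma>_inj[OF _ a1_in_I] by (fastforce simp: order_le_less)

lemma bernstein_off_edge:
  assumes "a \<in> A" "a \<notin> I" "x \<in> \<delta>"
  shows "bernstein A a x = 0"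
proof -
  obtain h where h: "h \<in> edge_ineqs A" "\<forall>x\<in>\<delta>. hval h x = 0"
    "\<forall>x\<in>Delta A. x \<notin> \<delta> \<longrightarrow> 0 < hval h x"
    using edge_functional[OF edge] by metis
  show ?thesis
    by (rule bernstein_zero[OF h(1) assms(1)]) (use h assms rp_in_Delta in \<open>auto simp: I_def\<close>)
qed

lemma interior_factor:
  assumes "a \<in> I" "0 < t" "t < 1" "h \<in> edge_ineqs A"
  shows "0 < hval h (pt t) \<or> hval h (rp a) = 0"
proof -
  have nonneg: "0 \<le> hval h (rp a0)" "0 \<le> hval h (rp a1)"
    using edge_ineq_nonneg[OF assms(4)] rp_in_Delta a0 a1 by auto
  show ?thesis
  proof (cases "hval h (rp a0) = 0 \<and> hval h (rp a1) = 0")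
    case True
    then show ?thesis using I_param(3)[OF assms(1)] hval_pt by simp
  next
    case False
    then have "0 < (1 - t) * hval h (rp a0) + t * hval h (rp a1)"
      using nonneg assms(2,3) by (auto simp: add_pos_nonneg add_nonneg_pos order_le_less)
    then show ?thesis using hval_pt by simp
  qed
qed

lemma bernstein_interior_pos: "a \<in> I \<Longrightarrow> 0 < t \<Longrightarrow> t < 1 \<Longrightarrow> 0 < bernstein A a (pt t)"
  using interior_factor by (intro bernstein_pos) auto

text \<open>Between two interior parameters, \<open>ln \<beta>\<^sub>a\<close> changes by an amount linear in the
  exponents \<open>h(a)\<close> ...\<close>
lemma ln_bernstein_increment:
  assumes a: "a \<in> I" and t: "0 < tx" "tx < 1" "0 < ty" "ty < 1"
  shows "ln (bernstein A a (pt ty)) - ln (bernstein A a (pt tx)) =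
    (\<Sum>h\<in>edge_ineqs A. hval h (rp a) * (ln (hval h (pt ty)) - ln (hval h (pt tx))))"
proof -
  have "a \<in> A" using a I_subset by blast
  then show ?thesis
    using ln_bernstein[of a "pt tx"] ln_bernstein[of a "pt ty"] interior_factor[OF a] t
    by (simp add: sum_subtractf right_diff_distrib)
qed

text \<open>... and the coefficient of \<open>\<sigma> a\<close> in this increment is positive: each edge
  functional contributes a nonnegative term since \<open>h \<circ> pt\<close> is affine with slope
  \<open>h(a1) - h(a0)\<close>, and the functional of an edge through \<open>a1\<close> but not \<open>a0\<close> contributes a
  positive one.\<close>
lemma drift_pos:
  assumes t: "0 < tx" "tx < ty" "ty < 1"
  shows "0 < (\<Sum>h\<in>edge_ineqs A.
      (hval h (rp a1) - hval h (rp a0)) * (ln (hval h (pt ty)) - ln (hval h (pt tx))))"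
    (is "0 < (\<Sum>h\<in>edge_ineqs A. ?term h)")
proof -
  have term_pos: "0 < ?term h" if h: "h \<in> edge_ineqs A" "hval h (rp a1) \<noteq> hval h (rp a0)" for h
  proof -
    have interior_pos: "0 < hval h (pt t)" if "0 < t" "t < 1" for t
      using interior_factor[OF a0_in_I that h(1)] interior_factor[OF a1_in_I that h(1)] h(2)
      by auto
    have pos: "0 < hval h (pt tx)" "0 < hval h (pt ty)" using interior_pos t by auto
    have diff: "hval h (pt ty) - hval h (pt tx) = (ty - tx) * (hval h (rp a1) - hval h (rp a0))"
      by (simp add: hval_pt algebra_simps)
    show ?thesis
    proof (cases "hval h (rp a0) < hval h (rp a1)")
      case True
      then have "0 < (ty - tx) * (hval h (rp a1) - hval h (rp a0))" using t by simp
      then have "ln (hval h (pt tx)) < ln (hval h (pt ty))" using diff pos by simp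
      then show ?thesis using True by (simp add: mult_pos_pos)
    next
      case False
      then have "hval h (rp a1) < hval h (rp a0)" using h(2) by simp
      then have "(ty - tx) * (hval h (rp a1) - hval h (rp a0)) < 0" using t by (simp add: mult_pos_neg)
      then have "ln (hval h (pt ty)) < ln (hval h (pt tx))" using diff pos by simp
      then show ?thesis using \<open>hval h (rp a1) < hval h (rp a0)\<close> by (simp add: mult_neg_neg)
    qed
  qed
  have nonneg: "0 \<le> ?term h" if "h \<in> edge_ineqs A" for h
    using term_pos[OF that] by (cases "hval h (rp a1) = hval h (rp a0)") auto
  have "rp a0 \<noteq> rp a1" using a0_ne_a1 rp_inj by blast
  then obtain e where e: "is_edge (Delta A) e" "rp a1 \<in> e" "rp a0 \<notin> e"
    using vertex_separated[OF vertex1 rp_in_Delta[OF a0]] by metis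
  obtain h where h: "h \<in> edge_ineqs A" "\<forall>x\<in>e. hval h x = 0"
    "\<forall>x\<in>Delta A. x \<notin> e \<longrightarrow> 0 < hval h x"
    using edge_functional[OF e(1)] by metis
  have "hval h (rp a1) \<noteq> hval h (rp a0)" using h e rp_in_Delta[OF a0] by auto
  then have "0 < ?term h" using term_pos[OF h(1)] by simp
  also have "\<dots> \<le> (\<Sum>h\<in>edge_ineqs A. ?term h)"
    by (rule member_le_sum[OF h(1) _ finite_edge_ineqs]) (use nonneg in blast)
  finally show ?thesis .
qed

lemma bernstein_ratio_increasing:
  assumes ab: "a \<in> I" "b \<in> I" "\<sigma> a < \<sigma> b" and t: "0 < tx" "tx < ty" "ty < 1"
  shows "bernstein A a (pt ty) * bernstein A b (pt tx) < bernstein A b (pt ty) * bernstein A a (pt tx)"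
proof -
  define L where "L h = ln (hval h (pt ty)) - ln (hval h (pt tx))" for h
  have t': "0 < tx" "tx < 1" "0 < ty" "ty < 1" using t by auto
  have pointwise: "hval h (rp b) * L h - hval h (rp a) * L h =
      (\<sigma> b - \<sigma> a) * ((hval h (rp a1) - hval h (rp a0)) * L h)" for h
    using I_param(3)[OF ab(1)] I_param(3)[OF ab(2)] by (simp add: hval_pt algebra_simps)
  have "(ln (bernstein A b (pt ty)) - ln (bernstein A b (pt tx))) -
      (ln (bernstein A a (pt ty)) - ln (bernstein A a (pt tx)))
      = (\<Sum>h\<in>edge_ineqs A. hval h (rp b) * L h - hval h (rp a) * L h)"
    unfolding ln_bernstein_increment[OF ab(1) t'] ln_bernstein_increment[OF ab(2) t'] L_def
    by (simp add: sum_subtractf)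
  also have "\<dots> = (\<sigma> b - \<sigma> a) * (\<Sum>h\<in>edge_ineqs A. (hval h (rp a1) - hval h (rp a0)) * L h)"
    by (simp add: pointwise sum_distrib_left)
  also have "0 < \<dots>" using drift_pos[OF t] ab(3) by (simp add: L_def)
  finally have "ln (bernstein A a (pt ty)) + ln (bernstein A b (pt tx)) <
      ln (bernstein A b (pt ty)) + ln (bernstein A a (pt tx))" by simp
  moreover have pos: "0 < bernstein A a (pt ty)" "0 < bernstein A b (pt tx)"
    "0 < bernstein A b (pt ty)" "0 < bernstein A a (pt tx)"
    using bernstein_interior_pos[OF ab(1)] bernstein_interior_pos[OF ab(2)] t' by auto
  ultimately have "ln (bernstein A a (pt ty) * bernstein A b (pt tx)) <
      ln (bernstein A b (pt ty) * bernstein A a (pt tx))" by (simp add: ln_mult)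
  then show ?thesis using pos by simp
qed

end

lemma det2_swap_vertices: "det2 (p0 - p1) (p2 - p1) = - det2 (p1 - p0) (p2 - p0)"
  by (simp add: det2_def algebra_simps)

lemma orientation_transfer:
  assumes "weakly_compatible A f"
  obtains s :: real where "s \<noteq> 0"
    "\<And>b0 b1 b2. b0 \<in> A \<Longrightarrow> b1 \<in> A \<Longrightarrow> b2 \<in> A \<Longrightarrow>
       det2 (rp b1 - rp b0) (rp b2 - rp b0) \<noteq> 0 \<Longrightarrow> det2 (f b1 - f b0) (f b2 - f b0) \<noteq> 0 \<Longrightarrow>
       sgn (det2 (f b1 - f b0) (f b2 - f b0)) = s * sgn (det2 (rp b1 - rp b0) (rp b2 - rp b0))"
proof -
  obtain r0 r1 r2 where r: "r0 \<in> A" "r1 \<in> A" "r2 \<in> A"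
    and indep: "aff_indep3 (rp r0) (rp r1) (rp r2)" "aff_indep3 (f r0) (f r1) (f r2)"
    and same: "\<And>b0 b1 b2. b0 \<in> A \<Longrightarrow> b1 \<in> A \<Longrightarrow> b2 \<in> A \<Longrightarrow>
          aff_indep3 (rp b0) (rp b1) (rp b2) \<Longrightarrow>
          orientation (rp b0) (rp b1) (rp b2) = orientation (rp r0) (rp r1) (rp r2) \<Longrightarrow>
          aff_indep3 (f b0) (f b1) (f b2) \<Longrightarrow>
          orientation (f b0) (f b1) (f b2) = orientation (f r0) (f r1) (f r2)"
    using assms unfolding weakly_compatible_def by blast
  define o_dom where "o_dom = orientation (rp r0) (rp r1) (rp r2)"
  define o_img where "o_img = orientation (f r0) (f r1) (f r2)"
  have o_dom: "o_dom = 1 \<or> o_dom = -1" and o_img: "o_img = 1 \<or> o_img = -1"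
    using indep by (auto simp: o_dom_def o_img_def orientation_def aff_indep3_iff sgn_if)
  show ?thesis
  proof (rule that)
    show "o_dom * o_img \<noteq> 0" using o_dom o_img by auto
    fix b0 b1 b2 assume b: "b0 \<in> A" "b1 \<in> A" "b2 \<in> A"
      and nondeg: "det2 (rp b1 - rp b0) (rp b2 - rp b0) \<noteq> 0" "det2 (f b1 - f b0) (f b2 - f b0) \<noteq> 0"
    have "sgn (det2 (rp b1 - rp b0) (rp b2 - rp b0)) = 1 \<or>
        sgn (det2 (rp b1 - rp b0) (rp b2 - rp b0)) = -1"
      using nondeg(1) by (simp add: sgn_if)
    then consider "sgn (det2 (rp b1 - rp b0) (rp b2 - rp b0)) = o_dom"
      | "sgn (det2 (rp b1 - rp b0) (rp b2 - rp b0)) = - o_dom"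
      using o_dom by auto
    then show "sgn (det2 (f b1 - f b0) (f b2 - f b0)) =
        o_dom * o_img * sgn (det2 (rp b1 - rp b0) (rp b2 - rp b0))"
    proof cases
      case 1
      then have "orientation (f b0) (f b1) (f b2) = o_img"
        using same[OF b] nondeg unfolding o_img_def o_dom_def
        by (simp add: aff_indep3_iff orientation_def)
      then show ?thesis using 1 o_dom by (auto simp: orientation_def)
    next
      case 2
      \<comment> \<open>swapping \<open>b0\<close> and \<open>b1\<close> reverses both orientations\<close>
      have "orientation (f b1) (f b0) (f b2) = o_img"
        using same[OF b(2,1,3)] nondeg 2 unfolding o_img_def o_dom_def
        by (simp add: aff_indep3_iff orientation_def det2_swap_vertices[of "rp b0"] det2_swap_vertices[of "f b0"] sgn_minus)
      then have "sgn (det2 (f b1 - f b0) (f b2 - f b0)) = - o_img"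
        by (simp add: orientation_def det2_swap_vertices[of "f b0"] sgn_minus)
      then show ?thesis using 2 o_dom by auto
    qed
  qed
qed

context polygon_edge
begin

lemma det2_along_edge:
  assumes "a \<in> I" "b \<in> I"
  shows "det2 (rp b - rp a) (x - rp a) = (\<sigma> b - \<sigma> a) * det2 (rp a1 - rp a0) (x - rp a0)"
  unfolding I_param(3)[OF assms(1)] I_param(3)[OF assms(2)] pt_def
  by (simp add: det2_def algebra_simps)

lemma off_edge_not_on_line:
  assumes c: "c \<in> A - I"
  shows "det2 (rp a1 - rp a0) (rp c - rp a0) \<noteq> 0"
proof
  assume "det2 (rp a1 - rp a0) (rp c - rp a0) = 0"
  moreover have "rp a1 - rp a0 \<noteq> 0" using a0_ne_a1 rp_inj by (metis eq_iff_diff_eq_0)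
  ultimately obtain k where "rp c - rp a0 = k *\<^sub>R (rp a1 - rp a0)" using det2_parallel by blast
  then have c_pt: "rp c = pt k" unfolding pt_def by (simp add: algebra_simps)
  obtain h where h: "h \<in> edge_ineqs A" "\<forall>x\<in>\<delta>. hval h x = 0"
    "\<forall>x\<in>Delta A. x \<notin> \<delta> \<longrightarrow> 0 < hval h x"
    using edge_functional[OF edge] by metis
  have "hval h (rp c) = 0"
    using h(2) a0_in_I a1_in_I by (simp add: c_pt hval_pt I_def)
  moreover have "rp c \<notin> \<delta>" "rp c \<in> Delta A" using c rp_in_Delta by (auto simp: I_def)
  ultimately show False using h(3) by fastforce
qed

lemma off_edge_nonempty: "A - I \<noteq> {}"
proof
  assume "A - I = {}"
  then have "rp ` A \<subseteq> \<delta>" unfolding I_def by auto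
  moreover have "convex \<delta>" using edge face_of_imp_convex unfolding is_edge_def by blast
  ultimately have "Delta A \<subseteq> \<delta>" unfolding Delta_def by (rule hull_minimal)
  then have "aff_dim (Delta A) \<le> aff_dim \<delta>" by (rule aff_dim_subset)
  then show False using dim_2 edge by (simp add: is_edge_def)
qed

text \<open>Under weak compatibility, every control point \<open>f c\<close> off the edge sees the control
  points of the edge in monotone angular order: the lattice triangles \<open>a b c\<close> with
  \<open>\<sigma> a < \<sigma> b\<close> all have the same orientation.\<close>
lemma monotone_view_off_edge:
  assumes wc: "weakly_compatible A f" and c: "c \<in> A - I"
  shows "\<exists>\<epsilon>. \<epsilon> \<noteq> 0 \<and> (\<forall>a\<in>I. \<forall>b\<in>I. \<sigma> a < \<sigma> b \<longrightarrow> 0 \<le> \<epsilon> * det2 (f a - f c) (f b - f c))"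
proof -
  obtain s :: real where s: "s \<noteq> 0"
    and transfer: "\<And>b0 b1 b2. b0 \<in> A \<Longrightarrow> b1 \<in> A \<Longrightarrow> b2 \<in> A \<Longrightarrow>
       det2 (rp b1 - rp b0) (rp b2 - rp b0) \<noteq> 0 \<Longrightarrow> det2 (f b1 - f b0) (f b2 - f b0) \<noteq> 0 \<Longrightarrow>
       sgn (det2 (f b1 - f b0) (f b2 - f b0)) = s * sgn (det2 (rp b1 - rp b0) (rp b2 - rp b0))"
    using orientation_transfer[OF wc] by metis
  define D where "D = det2 (rp a1 - rp a0) (rp c - rp a0)"
  have D: "D \<noteq> 0" using off_edge_not_on_line[OF c] by (simp add: D_def)
  have "0 \<le> (s * sgn D) * det2 (f a - f c) (f b - f c)"
    if ab: "a \<in> I" "b \<in> I" "\<sigma> a < \<sigma> b" for a b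
  proof -
    have rotate: "det2 (f a - f c) (f b - f c) = det2 (f b - f a) (f c - f a)"
      by (simp add: det2_def algebra_simps)
    show ?thesis
    proof (cases "det2 (f b - f a) (f c - f a) = 0")
      case False
      have "det2 (rp b - rp a) (rp c - rp a) = (\<sigma> b - \<sigma> a) * D"
        using det2_along_edge[OF ab(1,2)] by (simp add: D_def)
      moreover have "sgn ((\<sigma> b - \<sigma> a) * D) = sgn D" using ab(3) by (simp add: sgn_mult)
      ultimately have "sgn (det2 (f b - f a) (f c - f a)) = s * sgn D"
        using transfer[of a b c] ab c I_subset False D by auto
      then have "s * sgn D * det2 (f a - f c) (f b - f c) =
          sgn (det2 (f b - f a) (f c - f a)) * det2 (f b - f a) (f c - f a)"
        unfolding rotate by simp
      moreover have "0 \<le> sgn x * x" for x :: real by (simp add: sgn_if)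
      ultimately show ?thesis by simp
    qed (simp add: rotate)
  qed
  then show ?thesis using s D by (intro exI[of _ "s * sgn D"]) (auto simp: sgn_0_0)
qed

lemma sign_order_single_negative:
  fixes z :: "int \<times> int \<Rightarrow> real"
  assumes pos: "\<forall>a\<in>I. a \<noteq> a0 \<longrightarrow> 0 < z a"
    and ab: "a \<in> I" "b \<in> I" "z a \<le> 0" "0 \<le> z b" "z a < z b"
  shows "\<sigma> a < \<sigma> b"
proof -
  have "a = a0"
  proof (rule ccontr)
    assume "a \<noteq> a0"
    then have "0 < z a" using pos ab(1) by blast
    then show False using ab(3) by simp
  qed
  moreover then have "b \<noteq> a0" using ab(5) by auto
  ultimately show ?thesis using a0_first[OF ab(2)] by simp
qed

lemma sign_order_single_positive:
  fixes z :: "int \<times> int \<Rightarrow> real"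
  assumes neg: "\<forall>a\<in>I. a \<noteq> a1 \<longrightarrow> z a < 0"
    and ab: "a \<in> I" "b \<in> I" "z a \<le> 0" "0 \<le> z b" "z a < z b"
  shows "\<sigma> a < \<sigma> b"
proof -
  have "b = a1"
  proof (rule ccontr)
    assume "b \<noteq> a1"
    then have "z b < 0" using neg ab(2) by blast
    then show False using ab(4) by simp
  qed
  moreover then have "a \<noteq> a1" using ab(5) by auto
  ultimately show ?thesis using a1_last[OF ab(1)] by simp
qed

end

locale weighted_edge = polygon_edge +
  fixes w :: "int \<times> int \<Rightarrow> real"
  assumes w_pos: "\<forall>a\<in>A. 0 < w a"
begin

definition mass :: "real \<Rightarrow> real" where
  "mass t = (\<Sum>a\<in>I. w a * bernstein A a (pt t))"

definition wt :: "real \<Rightarrow> int \<times> int \<Rightarrow> real" where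
  "wt t a = w a * bernstein A a (pt t) / mass t"

text \<open>The denominator is positive on the closed edge: at the endpoints the vertex term is
  positive, in the interior all terms are.\<close>
lemma term_nonneg:
  assumes "0 \<le> t" "t \<le> 1" "a \<in> I"
  shows "0 \<le> w a * bernstein A a (pt t)"
proof -
  have "0 < w a" using w_pos I_subset assms(3) by blast
  moreover have "0 \<le> bernstein A a (pt t)" using bernstein_nonneg pt_in_Delta assms(1,2) by blast
  ultimately show ?thesis by simp
qed

lemma mass_pos:
  assumes t: "0 \<le> t" "t \<le> 1"
  shows "0 < mass t"
proof -
  have "\<exists>a\<in>I. 0 < bernstein A a (pt t)"
  proof -
    consider "t = 0" | "t = 1" | "0 < t" "t < 1" using t by linarith
    then show ?thesis
    proof cases
      case 1
      then show ?thesis using a0_in_I bernstein_at_own_point[OF a0] by auto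
    next
      case 2
      then show ?thesis using a1_in_I bernstein_at_own_point[OF a1] by auto
    next
      case 3
      then show ?thesis using a0_in_I bernstein_interior_pos[OF a0_in_I] by blast
    qed
  qed
  then obtain a where a: "a \<in> I" "0 < bernstein A a (pt t)" by blast
  moreover have "0 < w a" using w_pos I_subset a(1) by blast
  ultimately have "0 < w a * bernstein A a (pt t)" by simp
  also have "\<dots> \<le> mass t"
    unfolding mass_def using term_nonneg t by (intro member_le_sum a finite_I) auto
  finally show ?thesis .
qed

lemma wt_nonneg: "0 \<le> t \<Longrightarrow> t \<le> 1 \<Longrightarrow> a \<in> I \<Longrightarrow> 0 \<le> wt t a"
  unfolding wt_def using term_nonneg[of t a] mass_pos[of t] by simp

lemma wt_sum:
  assumes "0 \<le> t" "t \<le> 1"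
  shows "(\<Sum>a\<in>I. wt t a) = 1"
proof -
  have "mass t \<noteq> 0" using mass_pos[OF assms] by simp
  then show ?thesis unfolding wt_def by (simp add: sum_divide_distrib[symmetric] mass_def)
qed

lemma patch_along_edge:
  assumes t: "0 \<le> t" "t \<le> 1"
  shows "toric_patch A w f (pt t) = (\<Sum>a\<in>I. wt t a *\<^sub>R f a)"
proof -
  have zero: "bernstein A a (pt t) = 0" if "a \<in> A - I" for a
    using bernstein_off_edge that edge_points t by blast
  have "(\<Sum>a\<in>A. w a * bernstein A a (pt t)) = mass t"
    unfolding mass_def by (rule sum.mono_neutral_right[OF finite_A I_subset]) (simp add: zero)
  moreover have "(\<Sum>a\<in>A. (w a * bernstein A a (pt t)) *\<^sub>R f a)
      = (\<Sum>a\<in>I. (w a * bernstein A a (pt t)) *\<^sub>R f a)"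
    by (rule sum.mono_neutral_right[OF finite_A I_subset]) (simp add: zero)
  ultimately show ?thesis
    unfolding toric_patch_def wt_def by (simp add: scaleR_sum_right divide_inverse mult.commute)
qed

lemma wt_interior_pos:
  assumes "a \<in> I" "0 < t" "t < 1"
  shows "0 < wt t a"
proof -
  have "0 < w a" using w_pos I_subset assms(1) by blast
  then show ?thesis
    unfolding wt_def using bernstein_interior_pos[OF assms] mass_pos[of t] assms(2,3) by simp
qed

lemma wt_start: "a \<in> I \<Longrightarrow> wt 0 a = (if a = a0 then 1 else 0)"
proof -
  have other: "wt 0 a = 0" if "a \<in> I" "a \<noteq> a0" for a
    using bernstein_at_other_vertex[OF a0 vertex0 _ that(2)] that(1) I_subset
    by (auto simp: wt_def)
  have "(\<Sum>a\<in>I. wt 0 a) = wt 0 a0"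
    using sum.remove[OF finite_I a0_in_I, of "wt 0"] other by simp
  then show "a \<in> I \<Longrightarrow> wt 0 a = (if a = a0 then 1 else 0)" using wt_sum[of 0] other by auto
qed

lemma wt_end: "a \<in> I \<Longrightarrow> wt 1 a = (if a = a1 then 1 else 0)"
proof -
  have other: "wt 1 a = 0" if "a \<in> I" "a \<noteq> a1" for a
    using bernstein_at_other_vertex[OF a1 vertex1 _ that(2)] that(1) I_subset
    by (auto simp: wt_def)
  have "(\<Sum>a\<in>I. wt 1 a) = wt 1 a1"
    using sum.remove[OF finite_I a1_in_I, of "wt 1"] other by simp
  then show "a \<in> I \<Longrightarrow> wt 1 a = (if a = a1 then 1 else 0)" using wt_sum[of 1] other by auto
qed

lemma wt_interior_lt_1:
  assumes a: "a \<in> I" and t: "0 < t" "t < 1"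
  shows "wt t a < 1"
proof -
  obtain b where b: "b \<in> I" "b \<noteq> a" using a0_in_I a1_in_I a0_ne_a1 by metis
  have "wt t a + wt t b = (\<Sum>c\<in>{a, b}. wt t c)" using b by simp
  also have "\<dots> \<le> (\<Sum>c\<in>I. wt t c)"
    using a b wt_nonneg t by (intro sum_mono2[OF finite_I]) auto
  also have "\<dots> = 1" using wt_sum t by simp
  finally show ?thesis using wt_interior_pos[OF b(1) t] by simp
qed

lemma wt_ratio_increasing:
  assumes ab: "a \<in> I" "b \<in> I" "\<sigma> a < \<sigma> b" and t: "0 < tx" "tx < ty" "ty < 1"
  shows "wt ty a * wt tx b < wt ty b * wt tx a"
proof -
  define k where "k = w a * w b / (mass ty * mass tx)"
  have "0 < w a" "0 < w b" using w_pos I_subset ab(1,2) by auto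
  moreover have "0 < mass ty" "0 < mass tx" using mass_pos t by auto
  ultimately have "0 < k" by (simp add: k_def)
  then have "k * (bernstein A a (pt ty) * bernstein A b (pt tx))
      < k * (bernstein A b (pt ty) * bernstein A a (pt tx))"
    using bernstein_ratio_increasing[OF ab t] by simp
  then show ?thesis by (simp add: wt_def k_def field_simps)
qed

definition wt_change :: "real \<Rightarrow> real \<Rightarrow> int \<times> int \<Rightarrow> real" where
  "wt_change tx ty a = wt ty a - wt tx a"

lemma wt_change_from_start:
  assumes "0 < ty" "ty < 1"
  shows "wt_change 0 ty a0 < 0" and "\<forall>a\<in>I. a \<noteq> a0 \<longrightarrow> 0 < wt_change 0 ty a"
  using wt_interior_lt_1[OF a0_in_I assms] wt_interior_pos assms
  by (auto simp: wt_change_def wt_start a0_in_I)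

lemma wt_change_to_end:
  assumes "0 < tx" "tx < 1"
  shows "0 < wt_change tx 1 a1" and "\<forall>a\<in>I. a \<noteq> a1 \<longrightarrow> wt_change tx 1 a < 0"
  using wt_interior_lt_1[OF a1_in_I assms] wt_interior_pos assms
  by (auto simp: wt_change_def wt_end a1_in_I)

text \<open>Between interior parameters, the weights decrease before some point of the edge and
  increase after it: the increasing ratio forbids a decrease after an increase.\<close>
lemma wt_change_interior_sign_order:
  assumes t: "0 < tx" "tx < ty" "ty < 1"
    and ab: "a \<in> I" "b \<in> I" "wt_change tx ty a \<le> 0" "0 \<le> wt_change tx ty b"
    "wt_change tx ty a < wt_change tx ty b"
  shows "\<sigma> a < \<sigma> b"
proof (rule ccontr)
  assume "\<not> \<sigma> a < \<sigma> b"
  moreover have "a \<noteq> b" using ab(5) by auto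
  ultimately have "\<sigma> b < \<sigma> a" using \<sigma>_inj[OF ab(1,2)] by fastforce
  then have "wt ty b * wt tx a < wt ty a * wt tx b"
    using wt_ratio_increasing[OF ab(2,1) _ t] by simp
  moreover have "wt ty a * wt tx b \<le> wt tx a * wt tx b"
    using ab(3) wt_interior_pos[OF ab(2)] t by (simp add: wt_change_def)
  moreover have "wt tx a * wt tx b \<le> wt tx a * wt ty b"
    using ab(4) wt_interior_pos[OF ab(1)] t by (simp add: wt_change_def)
  ultimately show False by (simp add: mult.commute)
qed

text \<open>Between interior parameters the weights do change, by the strict ratio monotonicity.\<close>
lemma wt_change_interior_nontrivial:
  assumes t: "0 < tx" "tx < ty" "ty < 1"
  shows "\<exists>a\<in>I. wt_change tx ty a \<noteq> 0"
proof (rule ccontr)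
  assume "\<not> ?thesis"
  then have "wt ty a0 = wt tx a0" "wt ty a1 = wt tx a1"
    using a0_in_I a1_in_I by (auto simp: wt_change_def)
  then show False
    using wt_ratio_increasing[OF a0_in_I a1_in_I _ t] a0_first[OF a1_in_I a0_ne_a1[symmetric]]
    by (simp add: mult.commute)
qed

lemma wt_change_sign_change:
  assumes t: "0 \<le> tx" "tx < ty" "ty \<le> 1" "0 < tx \<or> ty < 1"
  shows "(\<exists>a\<in>I. wt_change tx ty a \<noteq> 0) \<and>
    (\<forall>a\<in>I. \<forall>b\<in>I. wt_change tx ty a \<le> 0 \<longrightarrow> 0 \<le> wt_change tx ty b \<longrightarrow>
      wt_change tx ty a < wt_change tx ty b \<longrightarrow> \<sigma> a < \<sigma> b)"
proof -
  consider (start) "tx = 0" "ty < 1" | (finish) "0 < tx" "ty = 1" | (interior) "0 < tx" "ty < 1"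
    using t by linarith
  then show ?thesis
  proof cases
    case start
    then have "wt_change tx ty a0 < 0" and pos: "\<forall>a\<in>I. a \<noteq> a0 \<longrightarrow> 0 < wt_change tx ty a"
      using wt_change_from_start[of ty] t by auto
    then show ?thesis using a0_in_I sign_order_single_negative[OF pos] by force
  next
    case finish
    then have "0 < wt_change tx ty a1" and neg: "\<forall>a\<in>I. a \<noteq> a1 \<longrightarrow> wt_change tx ty a < 0"
      using wt_change_to_end[of tx] t by auto
    then show ?thesis using a1_in_I sign_order_single_positive[OF neg] by force
  next
    case interior
    then show ?thesis using wt_change_interior_nontrivial wt_change_interior_sign_order t by blast
  qed
qed

text \<open>The two endpoints map to the distinct control points \<open>f a0\<close>, \<open>f a1\<close>; otherwise equal
  images would make the change of weights satisfy the hypotheses of \<open>sign_change\<close>, with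
  the lattice points off the edge as viewpoints, and all control points would be collinear.\<close>
theorem no_collision:
  assumes comp: "compatible A f" and t: "0 \<le> tx" "tx < ty" "ty \<le> 1"
  shows "toric_patch A w f (pt tx) \<noteq> toric_patch A w f (pt ty)"
proof
  assume eq: "toric_patch A w f (pt tx) = toric_patch A w f (pt ty)"
  have wc: "weakly_compatible A f" using comp by (simp add: compatible_def)
  have ends: "f a0 \<noteq> f a1"
    using comp a0 a1 vertex0 vertex1 a0_ne_a1 unfolding compatible_def by blast
  have not_ends: "0 < tx \<or> ty < 1"
  proof (rule ccontr)
    assume "\<not> (0 < tx \<or> ty < 1)"
    then have "tx = 0" "ty = 1" using t by auto
    then show False
      using eq ends patch_at_vertex[OF a0 vertex0 w_pos] patch_at_vertex[OF a1 vertex1 w_pos] by simp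
  qed
  define z where "z = wt_change tx ty"
  have sum_z: "(\<Sum>a\<in>I. z a) = 0"
    using wt_sum[of tx] wt_sum[of ty] t by (simp add: z_def wt_change_def sum_subtractf)
  have sum_zf: "(\<Sum>a\<in>I. z a *\<^sub>R f a) = 0"
    using patch_along_edge[of tx f] patch_along_edge[of ty f] t eq
    by (simp add: z_def wt_change_def scaleR_left_diff_distrib sum_subtractf)
  interpret sign_change I "A - I" \<sigma> z f a0 a1
    using finite_I sum_z sum_zf wt_change_sign_change[OF t not_ends] a0_in_I a1_in_I a0_first
      a1_last ends off_edge_nonempty monotone_view_off_edge[OF wc]
    unfolding z_def by unfold_locales auto
  obtain r0 r1 r2 where "r0 \<in> A" "r1 \<in> A" "r2 \<in> A" "aff_indep3 (f r0) (f r1) (f r2)"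
    using wc unfolding weakly_compatible_def by blast
  then show False using degenerate[of r0 r1 r2] by (auto simp: aff_indep3_iff)
qed

end

theorem corollary2:
  fixes A :: "(int \<times> int) set" and f :: "int \<times> int \<Rightarrow> real \<times> real"
  assumes "finite A"
    and "aff_dim (Delta A) = 2"
    and "compatible A f"
  shows "\<forall>w. (\<forall>a\<in>A. w a > 0) \<longrightarrow>
           (\<forall>\<delta>. is_edge (Delta A) \<delta> \<longrightarrow> inj_on (toric_patch A w f) \<delta>)"
proof (intro allI impI)
  fix w :: "int \<times> int \<Rightarrow> real" and \<delta>
  assume w_pos: "\<forall>a\<in>A. w a > 0" and edge: "is_edge (Delta A) \<delta>"
  interpret lattice_polygon A using assms(1,2) by unfold_locales
  obtain p q where "p \<in> A" "q \<in> A" "p \<noteq> q" "\<delta> = closed_segment (rp p) (rp q)"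
    "rp p extreme_point_of (Delta A)" "rp q extreme_point_of (Delta A)"
    using edge_segment[OF edge] by metis
  then interpret weighted_edge A \<delta> p q w
    using w_pos edge by unfold_locales auto
  show "inj_on (toric_patch A w f) \<delta>"
  proof (rule inj_onI)
    fix x y assume "x \<in> \<delta>" "y \<in> \<delta>" and eq: "toric_patch A w f x = toric_patch A w f y"
    then obtain tx ty where x: "0 \<le> tx" "tx \<le> 1" "x = pt tx" and y: "0 \<le> ty" "ty \<le> 1" "y = pt ty"
      using edge_points by meson
    have "\<not> tx < ty" and "\<not> ty < tx"
      using no_collision[OF assms(3)] x y eq by metis+
    then show "x = y" using x y by simp
  qed
qed

end
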